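(* Let $I=\{a,b\}$ with positive integers $a<b$. The sequence $(C_0(I),\ldots,C_{s(I)}(I))$ of Naruse-Newton coefficients of $I$ is log-concave if and only if $I$ is one of $\{1,2\}$, $\{1,3\}$, $\{2,3\}$, $\{2,4\}$.
   Context: Partitions are drawn as Young diagrams $\mathbb{D}(\lambda)$ in English notation; $c_{i,j}$ is the cell in row $i$, column $j$. The hook length $h_\lambda(c)$ is the number of cells of $\mathbb{D}(\lambda)$ weakly right of $c$ in its row or weakly below $c$ in its column (counting $c$ once). For $\mu\subseteq\lambda$, an excited diagram of $\lambda/\mu$ is a subset of $\mathbb{D}(\lambda)$ obtained from $\mathbb{D}(\mu)$ by repeatedly replacing a cell $c_{i,j}\in D$ by $c_{i+1,j+1}$, allowed iff $c_{i+1,j+1}\in\mathbb{D}(\lambda)$ and none of $c_{i,j+1},c_{i+1,j},c_{i+1,j+1}$ lies in $D$; $\mathbb{E}(\lambda/\mu)$ is their set. A ribbon with $n$ cells is read from its lower-left to its upper-right cell, each successive cell directly right of or directly above the previous; it corresponds to the set of $i\in\{1,\ldots,n-1\}$ with cell $i$ directly below cell $i+1$. A descent set is a non-empty finite set $I$ of positive integers; $\lambda^I$ is the unique partition with $\lambda^I_1=\lambda^I_2$ such that the cells $c_{i,j}\in\mathbb{D}(\lambda^I)$ with fewer than three of $c_{i,j+1},c_{i+1,j},c_{i+1,j+1}$ in $\mathbb{D}(\lambda^I)$ form a ribbon corresponding to $I$; this ribbon is $\mathbb{D}(\lambda^I)\setminus\mathbb{D}(\mu^I)$ for a partition $\mu^I$.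 Let $s(I)=\lambda^I_1-1$. Naruse-Newton coefficients: every excited diagram of $\lambda^I/\mu^I$ meets row 1 in $\{c_{1,1},\ldots,c_{1,r}\}$, $0\le r\le s$; for $0\le j\le s(I)$, $C_j(I)=\sum_D\prod_{c\in D,\,c\notin\text{row }1}h_{\lambda^I}(c)$, summed over $D\in\mathbb{E}(\lambda^I/\mu^I)$ with exactly $s-j$ cells in row 1. A sequence $(x_k)_{k=0}^m$ is log-concave if $x_k^2\ge x_{k-1}x_{k+1}$ for all $0<k<m$. *)

theory Defs
  imports Main
begin

text \<open>Cells are pairs (row, column), 1-indexed, English notation (row index grows downwards).
  Partitions are lists of positive integers in weakly decreasing order; parts beyond the
  length are 0.\<close>

type_synonym cell = "nat \<times> nat"

definition is_partition :: "nat list \<Rightarrow> bool" where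
  "is_partition lam \<longleftrightarrow> sorted_wrt (\<ge>) lam \<and> 0 \<notin> set lam"

definition part :: "nat list \<Rightarrow> nat \<Rightarrow> nat" where
  "part lam i = (if 1 \<le> i \<and> i \<le> length lam then lam ! (i - 1) else 0)"

definition young :: "nat list \<Rightarrow> cell set" where
  "young lam = {(i, j). 1 \<le> i \<and> 1 \<le> j \<and> j \<le> part lam i}"

definition hook :: "nat list \<Rightarrow> cell \<Rightarrow> nat" where
  "hook lam c = card {c' \<in> young lam.
      (fst c' = fst c \<and> snd c' \<ge> snd c) \<or> (snd c' = snd c \<and> fst c' \<ge> fst c)}"

definition excite_step :: "nat list \<Rightarrow> cell set \<Rightarrow> cell set \<Rightarrow> bool" where
  "excite_step lam D D' \<longleftrightarrow> (\<exists>i j. (i, j) \<in> D \<and> (i + 1, j + 1) \<in> young lam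
      \<and> (i, j + 1) \<notin> D \<and> (i + 1, j) \<notin> D \<and> (i + 1, j + 1) \<notin> D
      \<and> D' = (D - {(i, j)}) \<union> {(i + 1, j + 1)})"

definition excited_diagrams :: "nat list \<Rightarrow> nat list \<Rightarrow> cell set set" where
  "excited_diagrams lam mu = {D. (excite_step lam)\<^sup>*\<^sup>* (young mu) D}"

text \<open>A ribbon with n cells, read c 1, ..., c n from lower-left to upper-right, each cell
  directly right of or directly above the previous one; it corresponds to the set of
  i in {1..n-1} with c i directly below c (i+1).\<close>
definition ribbon_of :: "cell set \<Rightarrow> nat set \<Rightarrow> bool" where
  "ribbon_of R I \<longleftrightarrow> (\<exists>n (c :: nat \<Rightarrow> cell). n \<ge> 1 \<and> R = c ` {1..n} \<and>
      (\<forall>i \<in> {1..<n}.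
          c (i + 1) = (fst (c i), snd (c i) + 1)
        \<or> (fst (c i) = fst (c (i + 1)) + 1 \<and> snd (c (i + 1)) = snd (c i))) \<and>
      I = {i \<in> {1..<n}. fst (c i) = fst (c (i + 1)) + 1 \<and> snd (c (i + 1)) = snd (c i)})"

definition rim :: "nat list \<Rightarrow> cell set" where
  "rim lam = {(i, j) \<in> young lam.
      \<not> ((i, j + 1) \<in> young lam \<and> (i + 1, j) \<in> young lam \<and> (i + 1, j + 1) \<in> young lam)}"

definition lamI :: "nat set \<Rightarrow> nat list" where
  "lamI I = (THE lam. is_partition lam \<and> part lam 1 = part lam 2 \<and> ribbon_of (rim lam) I)"

definition muI :: "nat set \<Rightarrow> nat list" where
  "muI I = (THE mu. is_partition mu \<and> young mu \<subseteq> young (lamI I)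
              \<and> young (lamI I) - young mu = rim (lamI I))"

definition sI :: "nat set \<Rightarrow> nat" where
  "sI I = part (lamI I) 1 - 1"

definition NN_coeff :: "nat set \<Rightarrow> nat \<Rightarrow> nat" where
  "NN_coeff I j = (\<Sum>D \<in> {D \<in> excited_diagrams (lamI I) (muI I).
                        card {c \<in> D. fst c = 1} = sI I - j}.
                     \<Prod>c \<in> {c \<in> D. fst c \<noteq> 1}. hook (lamI I) c)"

definition log_concave :: "(nat \<Rightarrow> nat) \<Rightarrow> nat \<Rightarrow> bool" where
  "log_concave x m \<longleftrightarrow> (\<forall>k. 0 < k \<and> k < m \<longrightarrow> x (k - 1) * x (k + 1) \<le> (x k)\<^sup>2)"

end

(*
  For I = {a, b} the rim of lambda^I is a ribbon whose only up-steps are at positions a and b,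
  i.e. three horizontal runs in consecutive rows; together with lambda_1 = lambda_2 this forces
  lambda^I = (b - 1, b - 1, a) and mu^I = (b - 2, a - 1).  An excited diagram is then determined
  by the numbers r and m of cells slid out of rows 1 and 2.  With r = k the hooks outside row 1
  factor into the hooks of the k cells slid into row 2 times a weight w_m of the other cells, so
  C_k is that product times a tail sum of the w_m over m >= k + a + 1 - b.  Sliding one more cell
  out of row 2 gives w_m (m + 1) = w_(m+1) (m + b - a + 2), so w_m is proportional to the
  reciprocal of the rising factorial (m + 1)^(b - a + 1) and the tail sums telescope.
  For b >= a + 3 the coefficients start S, S, 2S; for b = a + 1 and b = a + 2 the closed forms
  violate log-concavity at k = 1 resp. k = 2 once a >= 3; the other pairs have s <= 1 or are
  {2, 4}, which is checked by hand.
*)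
theory Submission
  imports Defs Complex_Main
begin

section \<open>Partitions, Young diagrams and rims\<close>

lemma part_0 [simp]: "part lam 0 = 0"
  by (simp add: part_def)

lemma part_Nil [simp]: "part [] i = 0"
  by (simp add: part_def)

lemma part_two: "part [x, y] i = (if i = 1 then x else if i = 2 then y else 0)"
  by (auto simp: part_def numeral_eq_Suc nth_Cons split: nat.split)

lemma part_three: "part [x, y, z] i = (if i = 1 then x else if i = 2 then y else if i = 3 then z else 0)"
  by (auto simp: part_def numeral_eq_Suc nth_Cons split: nat.split)

lemma part_beyond_length: "length lam < i \<Longrightarrow> part lam i = 0"
  by (simp add: part_def)

lemma part_pos:
  assumes "is_partition lam" "1 \<le> i" "i \<le> length lam"
  shows "0 < part lam i"
proof -
  have "lam ! (i - 1) \<in> set lam" using assms(2,3) by simp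
  moreover have "0 \<notin> set lam" using assms(1) by (simp add: is_partition_def)
  ultimately have "lam ! (i - 1) \<noteq> 0" by metis
  then show ?thesis using assms(2,3) by (simp add: part_def)
qed

lemma part_equalityI:
  assumes "length l1 = length l2" "\<And>i. part l1 i = part l2 i"
  shows "l1 = l2"
proof (rule nth_equalityI)
  show "length l1 = length l2" by fact
  show "l1 ! k = l2 ! k" if "k < length l1" for k
    using that assms(1) assms(2)[of "k + 1"] by (simp add: part_def)
qed

lemma mem_young_iff: "(i, j) \<in> young lam \<longleftrightarrow> 1 \<le> i \<and> 1 \<le> j \<and> j \<le> part lam i"
  by (simp add: young_def)

lemma young_Nil [simp]: "young [] = {}"
  by (auto simp: young_def)

lemma young_one: "young [x] = {1} \<times> {1..x}"
  by (auto simp: young_def part_def split: if_splits)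

lemma young_two: "young [x, y] = {1} \<times> {1..x} \<union> {2} \<times> {1..y}"
  by (auto simp: young_def part_two split: if_splits)

lemma young_three: "young [x, y, z] = {1} \<times> {1..x} \<union> {2} \<times> {1..y} \<union> {3} \<times> {1..z}"
  by (auto simp: young_def part_three split: if_splits)

lemma row_end_in_young: "0 < part lam i \<Longrightarrow> (i, part lam i) \<in> young lam"
  by (cases i) (auto simp: mem_young_iff)

lemma young_inj:
  assumes "is_partition l1" "is_partition l2" "young l1 = young l2"
  shows "l1 = l2"
proof -
  have le: "part l i \<le> part l' i" if "young l = young l'" for l l' :: "nat list" and i
    using row_end_in_young[of l i] that by (cases "part l i = 0") (auto simp: mem_young_iff)
  have parts: "part l1 i = part l2 i" for i
    using le[of l1 l2 i] le[of l2 l1 i] assms(3) by simp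
  have "length l1 = length l2"
  proof (rule ccontr)
    assume "length l1 \<noteq> length l2"
    then consider "length l1 < length l2" | "length l2 < length l1" by linarith
    then show False
    proof cases
      case 1
      then show False using parts[of "length l2"] part_pos[OF assms(2), of "length l2"]
        by (simp add: part_beyond_length)
    next
      case 2
      then show False using parts[of "length l1"] part_pos[OF assms(1), of "length l1"]
        by (simp add: part_beyond_length)
    qed
  qed
  then show ?thesis using parts by (rule part_equalityI)
qed

lemma rim_subset_young: "rim lam \<subseteq> young lam"
  by (auto simp: rim_def)

lemma row_end_in_rim: "0 < part lam i \<Longrightarrow> (i, part lam i) \<in> rim lam"
  using row_end_in_young[of lam i] by (auto simp: rim_def mem_young_iff)

lemma last_row_start_in_rim:
  assumes "is_partition lam" "lam \<noteq> []"
  shows "(length lam, 1) \<in> rim lam"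
proof -
  have "1 \<le> length lam" using assms(2) by (cases lam) auto
  then show ?thesis using part_pos[OF assms(1), of "length lam"]
    by (auto simp: rim_def mem_young_iff part_beyond_length)
qed

lemma rim_LLa:
  assumes "1 \<le> a" "a \<le> L"
  shows "rim [L, L, a] = {3} \<times> {1..a} \<union> {2} \<times> {a..L} \<union> {1} \<times> {L..L}"
  using assms by (auto simp: rim_def young_three)

section \<open>The partition lamI for two descents\<close>

lemma right_run:
  fixes c :: "nat \<Rightarrow> cell"
  assumes right: "\<And>i. lo \<le> i \<Longrightarrow> i < hi \<Longrightarrow> c (i + 1) = (fst (c i), snd (c i) + 1)"
    and "lo \<le> k" "k \<le> hi"
  shows "c k = (fst (c lo), snd (c lo) + (k - lo))"
  using assms(2,3)
proof (induction k rule: dec_induct)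
  case (step n)
  then show ?case using right[of n] by (simp add: Suc_diff_le)
qed simp

lemma right_run_image:
  fixes c :: "nat \<Rightarrow> cell"
  assumes right: "\<And>i. lo \<le> i \<Longrightarrow> i < hi \<Longrightarrow> c (i + 1) = (fst (c i), snd (c i) + 1)"
    and "lo \<le> hi"
  shows "c ` {lo..hi} = {fst (c lo)} \<times> {snd (c lo)..snd (c lo) + (hi - lo)}"
proof
  show "c ` {lo..hi} \<subseteq> {fst (c lo)} \<times> {snd (c lo)..snd (c lo) + (hi - lo)}"
  proof (rule image_subsetI)
    fix k assume "k \<in> {lo..hi}"
    then show "c k \<in> {fst (c lo)} \<times> {snd (c lo)..snd (c lo) + (hi - lo)}"
      using right_run[of lo hi c k, OF right] by auto
  qed
  show "{fst (c lo)} \<times> {snd (c lo)..snd (c lo) + (hi - lo)} \<subseteq> c ` {lo..hi}"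
  proof
    fix x assume "x \<in> {fst (c lo)} \<times> {snd (c lo)..snd (c lo) + (hi - lo)}"
    then obtain j where "x = (fst (c lo), j)" "snd (c lo) \<le> j" "j \<le> snd (c lo) + (hi - lo)"
      by auto
    then show "x \<in> c ` {lo..hi}"
      using right_run[of lo hi c "lo + (j - snd (c lo))", OF right] assms(2)
      by (intro image_eqI[where x = "lo + (j - snd (c lo))"]) auto
  qed
qed

lemma ribbon_path_two_up_steps:
  fixes c :: "nat \<Rightarrow> cell"
  assumes "0 < a" "a < b" "b < n"
    and right: "\<And>i. i \<in> {1..<n} - {a, b} \<Longrightarrow> c (i + 1) = (fst (c i), snd (c i) + 1)"
    and up: "\<And>i. i \<in> {a, b} \<Longrightarrow> fst (c i) = fst (c (i + 1)) + 1 \<and> snd (c (i + 1)) = snd (c i)"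
  obtains r q where "c ` {1..n} = {r + 2} \<times> {q..q + a - 1} \<union> {r + 1} \<times> {q + a - 1..q + b - 2}
      \<union> {r} \<times> {q + b - 2..q + n - 3}"
proof -
  have run: "\<And>i. lo \<le> i \<Longrightarrow> i < hi \<Longrightarrow> c (i + 1) = (fst (c i), snd (c i) + 1)"
    if "1 \<le> lo" "hi \<le> n" "a \<notin> {lo..<hi}" "b \<notin> {lo..<hi}" for lo hi
    using that by (intro right) auto
  obtain p q where c1: "c 1 = (p, q)" by fastforce
  have run1: "c ` {1..a} = {p} \<times> {q..q + (a - 1)}" "c a = (p, q + (a - 1))"
    using right_run_image[of 1 a c, OF run[of 1 a]] right_run[of 1 a c a, OF run[of 1 a]] assms c1
    by auto
  have ca: "c (a + 1) = (p - 1, q + (a - 1))" "1 \<le> p"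
    using up[of a] run1(2) by (auto simp: prod_eq_iff)
  have run2: "c ` {a + 1..b} = {p - 1} \<times> {q + (a - 1)..q + (a - 1) + (b - (a + 1))}"
      "c b = (p - 1, q + (a - 1) + (b - (a + 1)))"
    using right_run_image[of "a + 1" b c, OF run[of "a + 1" b]]
      right_run[of "a + 1" b c b, OF run[of "a + 1" b]] assms ca
    by auto
  have cb: "c (b + 1) = (p - 2, q + b - 2)" "2 \<le> p"
    using up[of b] run2(2) assms by (auto simp: prod_eq_iff)
  have run3: "c ` {b + 1..n} = {p - 2} \<times> {q + b - 2..q + b - 2 + (n - (b + 1))}"
    using right_run_image[of "b + 1" n c, OF run[of "b + 1" n]] assms cb by auto
  obtain r where p: "p = r + 2"
    using cb(2) by (metis le_add_diff_inverse2)
  have "{1..n} = {1..a} \<union> {a + 1..b} \<union> {b + 1..n}"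
    using assms by auto
  then have "c ` {1..n} = c ` {1..a} \<union> c ` {a + 1..b} \<union> c ` {b + 1..n}"
    by (simp add: image_Un)
  also have "\<dots> = {r + 2} \<times> {q..q + a - 1} \<union> {r + 1} \<times> {q + a - 1..q + b - 2}
      \<union> {r} \<times> {q + b - 2..q + n - 3}"
    using run1(1) run2(1) run3 assms by (simp add: p)
  finally show thesis by (rule that)
qed

lemma ribbon_two_descents:
  assumes "0 < a" "a < b" and "ribbon_of R {a, b}"
  obtains r q n where "b < n" and "R = {r + 2} \<times> {q..q + a - 1} \<union> {r + 1} \<times> {q + a - 1..q + b - 2}
      \<union> {r} \<times> {q + b - 2..q + n - 3}"
proof -
  obtain n c where R: "R = c ` {1..n}"
    and steps: "\<forall>i\<in>{1..<n}. c (i + 1) = (fst (c i), snd (c i) + 1)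
        \<or> (fst (c i) = fst (c (i + 1)) + 1 \<and> snd (c (i + 1)) = snd (c i))"
    and descents: "{a, b} = {i \<in> {1..<n}. fst (c i) = fst (c (i + 1)) + 1 \<and> snd (c (i + 1)) = snd (c i)}"
    using assms(3) unfolding ribbon_of_def by blast
  have descent_iff: "i \<in> {1..<n} \<and> fst (c i) = fst (c (i + 1)) + 1 \<and> snd (c (i + 1)) = snd (c i)
      \<longleftrightarrow> i = a \<or> i = b" for i
    using descents[unfolded set_eq_iff, rule_format, of i] by auto
  have "b < n"
    using descent_iff[of b] by simp
  have right: "c (i + 1) = (fst (c i), snd (c i) + 1)" if "i \<in> {1..<n} - {a, b}" for i
    using that steps descent_iff[of i] by auto
  have up: "fst (c i) = fst (c (i + 1)) + 1 \<and> snd (c (i + 1)) = snd (c i)" if "i \<in> {a, b}" for i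
    using that descent_iff[of i] by blast
  obtain r q where "c ` {1..n} = {r + 2} \<times> {q..q + a - 1} \<union> {r + 1} \<times> {q + a - 1..q + b - 2}
      \<union> {r} \<times> {q + b - 2..q + n - 3}"
    by (rule ribbon_path_two_up_steps[where c = c, OF assms(1,2) \<open>b < n\<close> right up])
  with R have "R = {r + 2} \<times> {q..q + a - 1} \<union> {r + 1} \<times> {q + a - 1..q + b - 2}
      \<union> {r} \<times> {q + b - 2..q + n - 3}"
    by (rule trans)
  then show thesis by (rule that[OF \<open>b < n\<close>])
qed

lemma ribbon_of_rim_LLa:
  assumes "0 < a" "a < b"
  shows "ribbon_of (rim [b - 1, b - 1, a]) {a, b}"
proof -
  define c where "c k = (if k \<le> a then (3 :: nat, k) else if k \<le> b then (2, k - 1) else (1, b - 1))"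
    for k :: nat
  have "rim [b - 1, b - 1, a] = c ` {1..b + 1}"
  proof
    show "c ` {1..b + 1} \<subseteq> rim [b - 1, b - 1, a]"
      using assms by (auto simp: rim_LLa c_def)
    show "rim [b - 1, b - 1, a] \<subseteq> c ` {1..b + 1}"
    proof clarify
      fix i j assume "(i, j) \<in> rim [b - 1, b - 1, a]"
      then consider "i = 3" "1 \<le> j" "j \<le> a" | "i = 2" "a \<le> j" "j \<le> b - 1" | "i = 1" "j = b - 1"
        using assms by (auto simp: rim_LLa)
      then show "(i, j) \<in> c ` {1..b + 1}"
      proof cases
        case 1
        then show ?thesis using assms by (intro image_eqI[where x = j]) (auto simp: c_def)
      next
        case 2
        then show ?thesis using assms by (intro image_eqI[where x = "j + 1"]) (auto simp: c_def)
      next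
        case 3
        then show ?thesis using assms by (intro image_eqI[where x = "b + 1"]) (auto simp: c_def)
      qed
    qed
  qed
  then show ?thesis
    unfolding ribbon_of_def using assms by (intro exI[of _ "b + 1"] exI[of _ c]) (auto simp: c_def)
qed

(* The rim meets every row, ends every row and starts the last one; this pins the three runs
   to rows 3, 2, 1 starting in column 1. *)
lemma rim_three_runs_position:
  assumes lam: "is_partition lam" and "0 < a" "a < b" "b < n"
    and R: "rim lam = {r + 2} \<times> {q..q + a - 1}
      \<union> {r + 1} \<times> {q + a - 1..q + b - 2} \<union> {r} \<times> {q + b - 2..q + n - 3}"
  shows "r = 1" "length lam = 3" "q = 1"
proof -
  have in_young: "(i, j) \<in> young lam" if "(i, j) \<in> rim lam" for i j
    using that rim_subset_young by blast
  have "(r, q + b - 2) \<in> young lam" "(r + 2, q) \<in> young lam"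
    using in_young assms(2-4) by (auto simp: R)
  then have "1 \<le> r" "1 \<le> q" "lam \<noteq> []"
    by (auto simp: mem_young_iff)
  then have "(1, part lam 1) \<in> rim lam"
    using row_end_in_rim part_pos[OF lam, of 1] by (simp add: Suc_leI)
  then show "r = 1"
    using \<open>1 \<le> r\<close> by (auto simp: R)
  show "length lam = 3"
  proof (rule antisym)
    have "(3, q) \<in> young lam"
      using \<open>(r + 2, q) \<in> young lam\<close> \<open>r = 1\<close> by (simp add: numeral_3_eq_3)
    then show "3 \<le> length lam"
      using part_beyond_length[of lam 3] \<open>1 \<le> q\<close> by (force simp: mem_young_iff)
    show "length lam \<le> 3"
    proof (rule ccontr)
      assume "\<not> length lam \<le> 3"
      then have "(4, part lam 4) \<in> rim lam"
        using row_end_in_rim part_pos[OF lam, of 4] by simp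
      then show False by (auto simp: R \<open>r = 1\<close>)
    qed
  qed
  then show "q = 1"
    using last_row_start_in_rim[OF lam \<open>lam \<noteq> []\<close>] \<open>1 \<le> q\<close> by (auto simp: R \<open>r = 1\<close>)
qed

lemma ribbon_rim_determines_partition:
  assumes "0 < a" "a < b" and lam: "is_partition lam" "part lam 1 = part lam 2"
    and "ribbon_of (rim lam) {a, b}"
  shows "lam = [b - 1, b - 1, a]"
proof -
  obtain r q n where "b < n" and R: "rim lam = {r + 2} \<times> {q..q + a - 1}
      \<union> {r + 1} \<times> {q + a - 1..q + b - 2} \<union> {r} \<times> {q + b - 2..q + n - 3}"
    by (rule ribbon_two_descents[OF assms(1,2,5)])
  note position = rim_three_runs_position[OF lam(1) assms(1,2) \<open>b < n\<close> R]
  have bounds: "j \<le> part lam i" if "(i, j) \<in> rim lam" for i j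
  proof -
    have "(i, j) \<in> young lam"
      using that rim_subset_young by blast
    then show ?thesis by (simp add: mem_young_iff)
  qed
  have "part lam 3 = a"
    using row_end_in_rim[of lam 3] part_pos[OF lam(1), of 3] bounds[of 3 a] assms(1)
    by (auto simp: R position)
  moreover have "part lam 2 = b - 1"
    using row_end_in_rim[of lam 2] part_pos[OF lam(1), of 2] bounds[of 2 "b - 1"] assms(1,2)
    by (auto simp: R position)
  ultimately have "part lam i = part [b - 1, b - 1, a] i" for i
    using lam(2) part_beyond_length[of lam i] position(2)
    by (cases "i \<le> 3") (auto simp: part_three le_Suc_eq numeral_eq_Suc)
  then show ?thesis
    using position(2) by (intro part_equalityI) auto
qed

lemma lamI_two_descents:
  assumes "0 < a" "a < b"
  shows "lamI {a, b} = [b - 1, b - 1, a]"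
  unfolding lamI_def
proof (rule the_equality)
  show "is_partition [b - 1, b - 1, a] \<and> part [b - 1, b - 1, a] 1 = part [b - 1, b - 1, a] 2
      \<and> ribbon_of (rim [b - 1, b - 1, a]) {a, b}"
    using assms ribbon_of_rim_LLa[OF assms] by (auto simp: is_partition_def part_three)
  show "lam = [b - 1, b - 1, a]"
    if "is_partition lam \<and> part lam 1 = part lam 2 \<and> ribbon_of (rim lam) {a, b}" for lam
    using that ribbon_rim_determines_partition[OF assms] by blast
qed

lemma sI_two_descents: "0 < a \<Longrightarrow> a < b \<Longrightarrow> sI {a, b} = b - 2"
  by (simp add: sI_def lamI_two_descents part_three)

section \<open>Excited diagrams of [L, L, a] / [L - 1, a - 1]\<close>

(* The excited diagram in which the last r cells of row 1 and the last m cells of row 2 have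
   slid one step down the diagonal; exc_params collects the admissible pairs (r, m). *)
definition exc_diagram :: "nat \<Rightarrow> nat \<Rightarrow> nat \<Rightarrow> nat \<Rightarrow> cell set" where
  "exc_diagram L a r m = {1} \<times> {1..<L - r} \<union> {2} \<times> ({L - r<..L} \<union> {1..<a - m}) \<union> {3} \<times> {a - m<..a}"

definition exc_params :: "nat \<Rightarrow> nat \<Rightarrow> (nat \<times> nat) set" where
  "exc_params L a = {(r, m). r < L \<and> m < a \<and> r + a \<le> m + L}"

lemma young_minus_rim_LLa:
  assumes "1 \<le> a" "a \<le> L"
  shows "young [L, L, a] - rim [L, L, a] = exc_diagram L a 0 0"
  using assms by (auto simp: rim_LLa young_three exc_diagram_def)

lemma young_muI_two_descents:
  assumes "0 < a" "a < b"
  shows "young (muI {a, b}) = exc_diagram (b - 1) a 0 0"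
proof -
  let ?lam = "[b - 1, b - 1, a]"
  define mu where "mu = (if a = 1 then (if b = 2 then [] else [b - 2]) else [b - 2, a - 1])"
  have mu: "is_partition mu" "young mu = exc_diagram (b - 1) a 0 0"
  proof (atomize (full), cases "a = 1")
    case True
    then show "is_partition mu \<and> young mu = exc_diagram (b - 1) a 0 0"
      using assms by (cases "b = 2") (auto simp: mu_def is_partition_def young_one exc_diagram_def)
  next
    case False
    then show "is_partition mu \<and> young mu = exc_diagram (b - 1) a 0 0"
      using assms by (auto simp: mu_def is_partition_def young_two exc_diagram_def)
  qed
  have inner: "young ?lam - rim ?lam = exc_diagram (b - 1) a 0 0"
    using young_minus_rim_LLa[of a "b - 1"] assms by simp
  have "muI {a, b} = mu"
    unfolding muI_def lamI_two_descents[OF assms]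
  proof (rule the_equality)
    show "is_partition mu \<and> young mu \<subseteq> young ?lam \<and> young ?lam - young mu = rim ?lam"
      using mu inner rim_subset_young[of ?lam] by blast
    show "mu' = mu"
      if "is_partition mu' \<and> young mu' \<subseteq> young ?lam \<and> young ?lam - young mu' = rim ?lam" for mu'
    proof (rule young_inj)
      have "young mu' = young ?lam - rim ?lam"
        using that by auto
      then show "young mu' = young mu"
        using mu inner by simp
    qed (use that mu in auto)
  qed
  with mu show ?thesis by simp
qed

lemma exc_diagram_slide_row1:
  assumes "j + 1 = L - r"
  shows "exc_diagram L a r m - {(1, j)} \<union> {(2, j + 1)} = exc_diagram L a (r + 1) m"
proof (rule set_eqI)
  fix c :: cell
  obtain p q where c: "c = (p, q)" by fastforce
  have "p = 1 \<or> p = 2 \<or> p \<notin> {1, 2}" by blast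
  then show "c \<in> exc_diagram L a r m - {(1, j)} \<union> {(2, j + 1)} \<longleftrightarrow> c \<in> exc_diagram L a (r + 1) m"
    using assms unfolding c exc_diagram_def by (elim disjE) auto
qed

lemma exc_diagram_slide_row2:
  assumes "j + 1 = a - m" "a - m \<le> L - r"
  shows "exc_diagram L a r m - {(2, j)} \<union> {(3, j + 1)} = exc_diagram L a r (m + 1)"
proof (rule set_eqI)
  fix c :: cell
  obtain p q where c: "c = (p, q)" by fastforce
  have "p = 2 \<or> p = 3 \<or> p \<notin> {2, 3}" by blast
  then show "c \<in> exc_diagram L a r m - {(2, j)} \<union> {(3, j + 1)} \<longleftrightarrow> c \<in> exc_diagram L a r (m + 1)"
    using assms unfolding c exc_diagram_def by (elim disjE) auto
qed

lemma excite_step_exc_diagramE: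
  assumes "(r, m) \<in> exc_params L a" "a \<le> L" and "excite_step [L, L, a] (exc_diagram L a r m) D"
  obtains "(r + 1, m) \<in> exc_params L a" "D = exc_diagram L a (r + 1) m"
    | "(r, m + 1) \<in> exc_params L a" "D = exc_diagram L a r (m + 1)"
proof -
  obtain i j where ij: "(i, j) \<in> exc_diagram L a r m" "(i + 1, j + 1) \<in> young [L, L, a]"
      "(i, j + 1) \<notin> exc_diagram L a r m" "(i + 1, j) \<notin> exc_diagram L a r m"
    and D: "D = (exc_diagram L a r m - {(i, j)}) \<union> {(i + 1, j + 1)}"
    using assms(3) unfolding excite_step_def by blast
  from ij(1) consider (row1) "i = 1" "1 \<le> j" "j < L - r" | (pushed) "i = 2" "L - r < j" "j \<le> L"
    | (row2) "i = 2" "1 \<le> j" "j < a - m" | (row3) "i = 3"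
    by (auto simp: exc_diagram_def)
  then show thesis
  proof cases
    case row1
    then have "j + 1 = L - r" "a - m \<le> j"
      using ij(3,4) by (auto simp: exc_diagram_def)
    then have "D = exc_diagram L a (r + 1) m"
      using D row1(1) exc_diagram_slide_row1[of j L r a m] by (simp add: numeral_2_eq_2)
    moreover have "(r + 1, m) \<in> exc_params L a"
      using row1 assms(1) \<open>j + 1 = L - r\<close> \<open>a - m \<le> j\<close> by (auto simp: exc_params_def)
    ultimately show thesis using that(1) by blast
  next
    case pushed
    then show thesis
      using ij(2,3) assms(2) by (auto simp: exc_diagram_def young_three)
  next
    case row2
    then have "j + 1 = a - m"
      using ij(3) by (auto simp: exc_diagram_def)
    moreover have "a - m \<le> L - r"
      using assms(1) by (auto simp: exc_params_def)
    ultimately have "D = exc_diagram L a r (m + 1)"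
      using D row2(1) exc_diagram_slide_row2[of j a m L r] by (simp add: numeral_2_eq_2 numeral_3_eq_3)
    moreover have "(r, m + 1) \<in> exc_params L a"
      using row2 assms(1) \<open>j + 1 = a - m\<close> by (auto simp: exc_params_def)
    ultimately show thesis using that(2) by blast
  next
    case row3
    then show thesis
      using ij(2) by (simp add: young_three)
  qed
qed

lemma excite_step_exc_diagram_row1:
  assumes "(r + 1, m) \<in> exc_params L a"
  shows "excite_step [L, L, a] (exc_diagram L a r m) (exc_diagram L a (r + 1) m)"
  unfolding excite_step_def
proof (intro exI conjI)
  have j: "L - r - 1 + 1 = L - r" using assms by (auto simp: exc_params_def Suc_diff_Suc)
  then show "exc_diagram L a (r + 1) m
      = exc_diagram L a r m - {(1, L - r - 1)} \<union> {(1 + 1, L - r - 1 + 1)}"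
    using exc_diagram_slide_row1[OF j, of a m] by (simp add: numeral_2_eq_2)
qed (use assms in \<open>auto simp: exc_diagram_def exc_params_def young_three\<close>)

lemma excite_step_exc_diagram_row2:
  assumes "(r, m) \<in> exc_params L a" "(r, m + 1) \<in> exc_params L a"
  shows "excite_step [L, L, a] (exc_diagram L a r m) (exc_diagram L a r (m + 1))"
  unfolding excite_step_def
proof (intro exI conjI)
  have j: "a - m - 1 + 1 = a - m" "a - m \<le> L - r" using assms by (auto simp: exc_params_def)
  then show "exc_diagram L a r (m + 1)
      = exc_diagram L a r m - {(2, a - m - 1)} \<union> {(2 + 1, a - m - 1 + 1)}"
    using exc_diagram_slide_row2[OF j] by (simp add: numeral_2_eq_2 numeral_3_eq_3)
qed (use assms in \<open>auto simp: exc_diagram_def exc_params_def young_three\<close>)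

lemma excite_steps_exc_diagram:
  assumes "1 \<le> a" "a \<le> L" and "(excite_step [L, L, a])\<^sup>*\<^sup>* (exc_diagram L a 0 0) D"
  shows "D \<in> (\<lambda>(r, m). exc_diagram L a r m) ` exc_params L a"
  using assms(3)
proof (induction rule: rtranclp_induct)
  case base
  have "(0, 0) \<in> exc_params L a"
    using assms(1,2) by (simp add: exc_params_def)
  then show ?case by force
next
  case (step D D')
  then obtain r m where rm: "(r, m) \<in> exc_params L a" "D = exc_diagram L a r m"
    by auto
  obtain r' m' where "(r', m') \<in> exc_params L a" "D' = exc_diagram L a r' m'"
    using excite_step_exc_diagramE[OF rm(1) assms(2), of D'] step.hyps(2) rm(2) by metis
  then show ?case by force
qed

lemma exc_diagram_reachable:
  assumes "a \<le> L" and rm: "(r, m) \<in> exc_params L a"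
  shows "(excite_step [L, L, a])\<^sup>*\<^sup>* (exc_diagram L a 0 0) (exc_diagram L a r m)"
proof -
  let ?step = "excite_step [L, L, a]"
  have col: "?step\<^sup>*\<^sup>* (exc_diagram L a 0 0) (exc_diagram L a 0 k)" if "k \<le> m" for k
    using that
  proof (induction k)
    case (Suc k)
    then have "(0, k) \<in> exc_params L a" "(0, k + 1) \<in> exc_params L a"
      using rm assms(1) by (auto simp: exc_params_def)
    then have "?step (exc_diagram L a 0 k) (exc_diagram L a 0 (k + 1))"
      by (rule excite_step_exc_diagram_row2)
    with Suc show ?case by simp
  qed simp
  have "?step\<^sup>*\<^sup>* (exc_diagram L a 0 0) (exc_diagram L a k m)" if "k \<le> r" for k
    using that
  proof (induction k)
    case (Suc k)
    then have "(k + 1, m) \<in> exc_params L a"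
      using rm by (auto simp: exc_params_def)
    then have "?step (exc_diagram L a k m) (exc_diagram L a (k + 1) m)"
      by (rule excite_step_exc_diagram_row1)
    with Suc show ?case by simp
  qed (use col in simp)
  then show ?thesis by simp
qed

lemma excited_diagrams_LLa:
  assumes "1 \<le> a" "a \<le> L" and "young mu = exc_diagram L a 0 0"
  shows "excited_diagrams [L, L, a] mu = (\<lambda>(r, m). exc_diagram L a r m) ` exc_params L a"
  using excite_steps_exc_diagram[OF assms(1,2)] exc_diagram_reachable[OF assms(2)]
  by (auto simp: excited_diagrams_def assms(3))

lemma card_row1_exc_diagram: "card {c \<in> exc_diagram L a r m. fst c = 1} = L - r - 1"
proof -
  have "{c \<in> exc_diagram L a r m. fst c = 1} = {1} \<times> {1..<L - r}"
    by (auto simp: exc_diagram_def)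
  then show ?thesis by (simp add: card_cartesian_product_singleton)
qed

lemma card_row3_exc_diagram: "m \<le> a \<Longrightarrow> card {c \<in> exc_diagram L a r m. fst c = 3} = m"
proof -
  have "{c \<in> exc_diagram L a r m. fst c = 3} = {3} \<times> {a - m<..a}"
    by (auto simp: exc_diagram_def)
  then show "m \<le> a \<Longrightarrow> ?thesis" by (simp add: card_cartesian_product_singleton)
qed

lemma inj_on_exc_diagram: "inj_on (\<lambda>(r, m). exc_diagram L a r m) (exc_params L a)"
proof (rule inj_onI)
  fix p p' assume params: "p \<in> exc_params L a" "p' \<in> exc_params L a"
    and eq: "(\<lambda>(r, m). exc_diagram L a r m) p = (\<lambda>(r, m). exc_diagram L a r m) p'"
  obtain r m r' m' where p: "p = (r, m)" "p' = (r', m')" by fastforce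
  have E: "exc_diagram L a r m = exc_diagram L a r' m'"
    using eq by (simp add: p)
  have "L - r - 1 = L - r' - 1"
    using card_row1_exc_diagram[of L a r m] card_row1_exc_diagram[of L a r' m'] by (simp add: E)
  moreover have "m = m'"
    using card_row3_exc_diagram[of m a L r] card_row3_exc_diagram[of m' a L r'] params
    by (simp add: E p exc_params_def)
  ultimately show "p = p'"
    using params by (auto simp: p exc_params_def)
qed

section \<open>The coefficients as hook products\<close>

lemma hook_row2:
  assumes "1 \<le> j" "j \<le> L" "a \<le> L"
  shows "hook [L, L, a] (2, j) = L + 1 - j + (if j \<le> a then 1 else 0)"
proof -
  have S: "{c' \<in> young [L, L, a]. (fst c' = fst (2::nat, j) \<and> snd c' \<ge> snd (2::nat, j))
      \<or> (snd c' = snd (2::nat, j) \<and> fst c' \<ge> fst (2::nat, j))}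
    = {2} \<times> {j..L} \<union> (if j \<le> a then {(3, j)} else {})"
    using assms by (auto simp: young_three)
  show ?thesis
    unfolding hook_def S by (simp add: card_cartesian_product_singleton card_insert_if)
qed

lemma hook_row3:
  assumes "1 \<le> j" "j \<le> a"
  shows "hook [L, L, a] (3, j) = a + 1 - j"
proof -
  have S: "{c' \<in> young [L, L, a]. (fst c' = fst (3::nat, j) \<and> snd c' \<ge> snd (3::nat, j))
      \<or> (snd c' = snd (3::nat, j) \<and> fst c' \<ge> fst (3::nat, j))} = {3} \<times> {j..a}"
    using assms by (auto simp: young_three)
  show ?thesis
    unfolding hook_def S by (simp add: card_cartesian_product_singleton)
qed

definition upper_weight :: "nat \<Rightarrow> nat \<Rightarrow> nat \<Rightarrow> nat" where
  "upper_weight L a r = (\<Prod>j \<in> {L - r<..L}. hook [L, L, a] (2, j))"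

definition lower_weight :: "nat \<Rightarrow> nat \<Rightarrow> nat \<Rightarrow> nat" where
  "lower_weight L a m =
    (\<Prod>j \<in> {1..<a - m}. hook [L, L, a] (2, j)) * (\<Prod>j \<in> {a - m<..a}. hook [L, L, a] (3, j))"

lemma prod_singleton_times: "(\<Prod>c \<in> {x} \<times> A. f c) = (\<Prod>y \<in> A. f (x, y))"
  by (rule prod.reindex_bij_witness[of _ "Pair x" snd]) auto

lemma prod_hook_exc_diagram:
  assumes "(r, m) \<in> exc_params L a"
  shows "(\<Prod>c \<in> {c \<in> exc_diagram L a r m. fst c \<noteq> 1}. hook [L, L, a] c)
    = upper_weight L a r * lower_weight L a m"
proof -
  let ?h = "hook [L, L, a]"
  have S: "{c \<in> exc_diagram L a r m. fst c \<noteq> 1} = {2} \<times> ({L - r<..L} \<union> {1..<a - m}) \<union> {3} \<times> {a - m<..a}"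
    by (auto simp: exc_diagram_def)
  have "(\<Prod>c \<in> {c \<in> exc_diagram L a r m. fst c \<noteq> 1}. ?h c)
      = (\<Prod>c \<in> {2} \<times> ({L - r<..L} \<union> {1..<a - m}). ?h c) * (\<Prod>c \<in> {3} \<times> {a - m<..a}. ?h c)"
    unfolding S by (intro prod.union_disjoint) auto
  also have "\<dots> = (\<Prod>j \<in> {L - r<..L} \<union> {1..<a - m}. ?h (2, j)) * (\<Prod>j \<in> {a - m<..a}. ?h (3, j))"
    by (simp add: prod_singleton_times)
  also have "(\<Prod>j \<in> {L - r<..L} \<union> {1..<a - m}. ?h (2, j))
      = (\<Prod>j \<in> {L - r<..L}. ?h (2, j)) * (\<Prod>j \<in> {1..<a - m}. ?h (2, j))"
    using assms by (intro prod.union_disjoint) (auto simp: exc_params_def)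
  finally show ?thesis
    by (simp add: upper_weight_def lower_weight_def mult.assoc)
qed

lemma exc_params_by_row1:
  assumes "k < L"
  shows "{p \<in> exc_params L a. card {c \<in> (\<lambda>(r, m). exc_diagram L a r m) p. fst c = 1} = L - 1 - k}
    = {k} \<times> {k + a - L..<a}"
proof -
  have "card {c \<in> (\<lambda>(r, m). exc_diagram L a r m) p. fst c = 1} = L - fst p - 1" for p
    using card_row1_exc_diagram[of L a "fst p" "snd p"] by (simp add: case_prod_beta)
  then show ?thesis
    using assms by (auto simp: exc_params_def)
qed

(* The lower summation bound is a truncated subtraction: the sum starts at max 0 (k + a - L). *)
lemma NN_coeff_two_descents:
  assumes "0 < a" "a \<le> L" "k < L"
  shows "NN_coeff {a, L + 1} k = upper_weight L a k * (\<Sum>m = k + a - L..<a. lower_weight L a m)"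
proof -
  let ?E = "\<lambda>(r, m). exc_diagram L a r m"
  let ?M = "{k + a - L..<a}"
  have params: "{k} \<times> ?M \<subseteq> exc_params L a"
    using assms by (auto simp: exc_params_def)
  have lam: "lamI {a, L + 1} = [L, L, a]"
    using lamI_two_descents[of a "L + 1"] assms by simp
  have E: "excited_diagrams [L, L, a] (muI {a, L + 1}) = ?E ` exc_params L a"
    using excited_diagrams_LLa[of a L] young_muI_two_descents[of a "L + 1"] assms by simp
  have s: "sI {a, L + 1} - k = L - 1 - k"
    using sI_two_descents[of a "L + 1"] assms by simp
  have filter_image: "{D \<in> f ` A. P D} = f ` {p \<in> A. P (f p)}"
    for f :: "nat \<times> nat \<Rightarrow> cell set" and A P by auto
  have "NN_coeff {a, L + 1} k = (\<Sum>D \<in> ?E ` ({k} \<times> ?M). \<Prod>c \<in> {c \<in> D. fst c \<noteq> 1}. hook [L, L, a] c)"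
    unfolding NN_coeff_def E filter_image s exc_params_by_row1[OF assms(3)] lam by simp
  also have "\<dots> = (\<Sum>(r, m) \<in> {k} \<times> ?M. upper_weight L a r * lower_weight L a m)"
  proof -
    have "(\<Prod>c \<in> {c \<in> ?E p. fst c \<noteq> 1}. hook [L, L, a] c)
        = upper_weight L a (fst p) * lower_weight L a (snd p)" if "p \<in> {k} \<times> ?M" for p
      using prod_hook_exc_diagram[of "fst p" "snd p" L a] params that by (auto simp: case_prod_beta)
    then show ?thesis
      by (subst sum.reindex[OF inj_on_subset[OF inj_on_exc_diagram params]])
        (auto simp: case_prod_beta intro!: sum.cong)
  qed
  also have "\<dots> = upper_weight L a k * (\<Sum>m \<in> ?M. lower_weight L a m)"
    by (simp add: sum.cartesian_product[symmetric] sum_distrib_left)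
  finally show ?thesis .
qed

section \<open>Closed forms for the weights\<close>

lemma upper_weight_0 [simp]: "upper_weight L a 0 = 1"
  by (simp add: upper_weight_def)

lemma upper_weight_Suc:
  assumes "r < L"
  shows "upper_weight L a (r + 1) = hook [L, L, a] (2, L - r) * upper_weight L a r"
proof -
  have "{L - (r + 1)<..L} = insert (L - r) {L - r<..L}"
    using assms by auto
  then show ?thesis by (simp add: upper_weight_def)
qed

lemma lower_weight_pos:
  assumes "m < a" "a \<le> L"
  shows "0 < lower_weight L a m"
  unfolding lower_weight_def
  by (intro mult_pos_pos prod_pos) (use assms in \<open>auto simp: hook_row2 hook_row3\<close>)

lemma lower_weight_Suc:
  assumes "Suc m < a" "a \<le> L"
  shows "lower_weight L a m * (m + 1) = lower_weight L a (Suc m) * (m + 1 + (L + 2 - a))"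
proof -
  let ?h = "hook [L, L, a]"
  let ?A = "\<Prod>j \<in> {1..<a - Suc m}. ?h (2, j)" and ?B = "\<Prod>j \<in> {a - m<..a}. ?h (3, j)"
  have "{1..<a - m} = insert (a - Suc m) {1..<a - Suc m}"
    using assms by auto
  then have m: "lower_weight L a m = ?h (2, a - Suc m) * ?A * ?B"
    by (simp add: lower_weight_def)
  have "{a - Suc m<..a} = insert (a - m) {a - m<..a}"
    using assms by auto
  then have Suc_m: "lower_weight L a (Suc m) = ?A * (?h (3, a - m) * ?B)"
    by (simp add: lower_weight_def)
  have "?h (2, a - Suc m) = m + 1 + (L + 2 - a)" "?h (3, a - m) = m + 1"
    using assms by (simp_all add: hook_row2 hook_row3)
  then show ?thesis
    unfolding m Suc_m by (simp only: ac_simps)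
qed

lemma lower_weight_mult_pochhammer:
  assumes "m < a" "a \<le> L"
  shows "lower_weight L a m * pochhammer (m + 1) (L + 2 - a) = lower_weight L a 0 * fact (L + 2 - a)"
  using assms(1)
proof (induction m)
  case 0
  then show ?case by (simp add: pochhammer_fact)
next
  case (Suc m)
  let ?k = "L + 2 - a"
  have P: "(m + 1) * pochhammer (m + 2) ?k = pochhammer (m + 1) ?k * (m + 1 + ?k)"
    using pochhammer_rec[of "m + 1" ?k] pochhammer_Suc[of "m + 1" ?k] by simp
  have "lower_weight L a (Suc m) * pochhammer (m + 2) ?k * (m + 1)
      = (lower_weight L a (Suc m) * (m + 1 + ?k)) * pochhammer (m + 1) ?k"
    using P by (metis mult.assoc mult.commute)
  also have "\<dots> = lower_weight L a m * pochhammer (m + 1) ?k * (m + 1)"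
    unfolding lower_weight_Suc[OF Suc.prems assms(2), symmetric] by (simp only: ac_simps)
  finally have "lower_weight L a (Suc m) * pochhammer (m + 2) ?k = lower_weight L a m * pochhammer (m + 1) ?k"
    by (rule mult_right_cancel[THEN iffD1, rotated]) simp
  then show ?case
    using Suc by simp
qed

lemma inverse_pochhammer_telescope:
  fixes x :: real
  assumes "0 \<le> x" "0 < d"
  shows "1 / pochhammer (x + 1) (Suc d) = (1 / pochhammer (x + 1) d - 1 / pochhammer (x + 2) d) / d"
proof -
  let ?P = "pochhammer (x + 1) (Suc d)" and ?A = "pochhammer (x + 1) d" and ?B = "pochhammer (x + 2) d"
  have pos: "0 < ?A" "0 < ?B"
    using assms by (simp_all add: pochhammer_pos)
  have "?P = ?A * (x + 1 + d)"
    by (simp add: pochhammer_Suc)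
  then have A: "?P / ?A = x + 1 + d"
    using pos by simp
  have "?P = (x + 1) * ?B"
    using pochhammer_rec[of "x + 1" d] by (simp add: add.assoc)
  then have B: "?P / ?B = x + 1"
    using pos by simp
  have "?P * (1 / ?A - 1 / ?B) = d"
    using A B by (simp add: right_diff_distrib)
  moreover have "0 < ?P"
    using assms(1) by (simp add: pochhammer_pos)
  ultimately have "1 / ?A - 1 / ?B = d / ?P"
    by (simp add: eq_divide_eq mult.commute)
  then show ?thesis
    using assms(2) by simp
qed

lemma sum_inverse_pochhammer:
  assumes "0 < d" "j \<le> n"
  shows "(\<Sum>m = j..<n. 1 / pochhammer (real m + 1) (Suc d))
    = (1 / pochhammer (real j + 1) d - 1 / pochhammer (real n + 1) d) / d"
proof -
  let ?f = "\<lambda>m::nat. 1 / pochhammer (real m + 1) d / d"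
  have "1 / pochhammer (real m + 1) (Suc d) = - ?f (Suc m) - - ?f m" for m
    using inverse_pochhammer_telescope[of "real m" d] assms(1)
    by (simp add: diff_divide_distrib add.commute add.left_commute)
  then have "(\<Sum>m = j..<n. 1 / pochhammer (real m + 1) (Suc d)) = (\<Sum>m = j..<n. - ?f (Suc m) - - ?f m)"
    by simp
  also have "\<dots> = - ?f n - - ?f j"
    by (rule sum_Suc_diff'[OF assms(2)])
  finally show ?thesis
    by (simp add: diff_divide_distrib)
qed

lemma sum_lower_weight:
  assumes "j \<le> a" "a \<le> L"
  shows "real (\<Sum>m = j..<a. lower_weight L a m) = fact (L + 2 - a) / real (L + 1 - a) * real (lower_weight L a 0)
    * (1 / pochhammer (real j + 1) (L + 1 - a) - 1 / pochhammer (real a + 1) (L + 1 - a))"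
proof -
  define d where "d = L + 1 - a"
  have k: "L + 2 - a = Suc d" and "0 < d"
    using assms by (simp_all add: d_def)
  have lw: "real (lower_weight L a m)
      = real (lower_weight L a 0) * fact (Suc d) * (1 / pochhammer (real m + 1) (Suc d))" if "m < a" for m
  proof -
    have "real (lower_weight L a m * pochhammer (m + 1) (Suc d)) = real (lower_weight L a 0 * fact (Suc d))"
      using lower_weight_mult_pochhammer[OF that assms(2)] by (simp only: k)
    then have "real (lower_weight L a m) * pochhammer (real m + 1) (Suc d)
        = real (lower_weight L a 0) * fact (Suc d)"
      by (simp only: of_nat_mult pochhammer_of_nat[symmetric] of_nat_fact of_nat_add of_nat_1)
    moreover have "0 < pochhammer (real m + 1) (Suc d)"
      by (simp add: pochhammer_pos)
    ultimately show ?thesis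
      by (simp add: field_simps)
  qed
  have "real (\<Sum>m = j..<a. lower_weight L a m) = (\<Sum>m = j..<a. real (lower_weight L a m))"
    by simp
  also have "\<dots> = (\<Sum>m = j..<a. real (lower_weight L a 0) * fact (Suc d) * (1 / pochhammer (real m + 1) (Suc d)))"
    by (intro sum.cong refl lw) simp
  also have "\<dots> = real (lower_weight L a 0) * fact (Suc d) * ((1 / pochhammer (real j + 1) d - 1 / pochhammer (real a + 1) d) / d)"
    by (simp only: sum_distrib_left[symmetric] sum_inverse_pochhammer[OF \<open>0 < d\<close> assms(1)])
  finally show ?thesis
    unfolding k d_def[symmetric] by (simp add: ac_simps)
qed

section \<open>Log-concavity\<close>

lemma not_log_concaveI:
  assumes "0 < k" "k < s" "real (x k) ^ 2 < real (x (k - 1)) * real (x (k + 1))"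
  shows "\<not> log_concave x s"
proof -
  have "x k ^ 2 < x (k - 1) * x (k + 1)"
    using assms(3) by (simp flip: of_nat_power of_nat_mult)
  then show ?thesis
    using assms(1,2) unfolding log_concave_def by (meson leD)
qed

lemma log_concave_trivial: "s \<le> 1 \<Longrightarrow> log_concave x s"
  by (simp add: log_concave_def)

lemma not_log_concave_far:
  assumes "0 < a" "a + 3 \<le> b"
  shows "\<not> log_concave (NN_coeff {a, b}) (sI {a, b})"
proof -
  obtain c where b: "b = a + 3 + c"
    using assms(2) le_Suc_ex by blast
  define S where "S = (\<Sum>m = 0..<a. lower_weight (b - 1) a m)"
  have b_pred: "b - 1 + 1 = b"
    using assms by simp
  have C: "NN_coeff {a, b} k = upper_weight (b - 1) a k * S" if "k \<le> 2" for k
    using NN_coeff_two_descents[of a "b - 1" k, unfolded b_pred] that assms by (simp add: S_def b)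
  have U: "upper_weight (b - 1) a 1 = 1" "upper_weight (b - 1) a 2 = 2"
    using upper_weight_Suc[of 0 "b - 1" a] upper_weight_Suc[of 1 "b - 1" a, unfolded one_add_one]
    by (simp_all add: hook_row2 b)
  have "0 < S"
    unfolding S_def using assms by (intro sum_pos) (auto intro: lower_weight_pos)
  show ?thesis
  proof (rule not_log_concaveI[of 1])
    show "1 < sI {a, b}"
      using assms by (simp add: sI_two_descents)
    show "real (NN_coeff {a, b} 1) ^ 2 < real (NN_coeff {a, b} (1 - 1)) * real (NN_coeff {a, b} (1 + 1))"
      unfolding one_add_one using C[of 0] C[of 1] C[of 2] U \<open>0 < S\<close> by (simp add: power2_eq_square)
  qed simp
qed

lemma NN_coeff_consecutive:
  assumes "3 \<le> a"
  defines "X \<equiv> real (lower_weight a a 0)" and "t \<equiv> 1 / (real a + 1)"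
  shows "real (NN_coeff {a, a + 1} 0) = 2 * X * (1 - t)"
    and "real (NN_coeff {a, a + 1} 1) = 2 * (2 * X * (1 / 2 - t))"
    and "real (NN_coeff {a, a + 1} 2) = 6 * (2 * X * (1 / 3 - t))"
proof -
  have C: "real (NN_coeff {a, a + 1} k) = upper_weight a a k * (2 * X * (1 / (real k + 1) - t))"
    if "k < a" for k
    using NN_coeff_two_descents[of a a k] sum_lower_weight[of k a a] that assms(1)
    by (simp add: X_def t_def)
  have U: "upper_weight a a 1 = 2" "upper_weight a a 2 = 6"
    using upper_weight_Suc[of 0 a a] upper_weight_Suc[of 1 a a, unfolded one_add_one] assms(1)
    by (simp_all add: hook_row2)
  show "real (NN_coeff {a, a + 1} 0) = 2 * X * (1 - t)"
    using C[of 0] assms(1) by simp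
  show "real (NN_coeff {a, a + 1} 1) = 2 * (2 * X * (1 / 2 - t))"
    using C[of 1] U assms(1) by simp
  show "real (NN_coeff {a, a + 1} 2) = 6 * (2 * X * (1 / 3 - t))"
    using C[of 2] U assms(1) by simp
qed

lemma not_log_concave_consecutive:
  assumes "3 \<le> a"
  shows "\<not> log_concave (NN_coeff {a, a + 1}) (sI {a, a + 1})"
proof -
  define X where "X = real (lower_weight a a 0)"
  define t where "t = 1 / (real a + 1)"
  have "0 < X"
    using lower_weight_pos[of 0 a a] assms by (simp add: X_def)
  have "0 < t" "t \<le> 1 / 4"
    using assms by (simp_all add: t_def field_simps)
  then have "0 < 1 / 2 - 2 * t + t ^ 2"
    using zero_less_power[of t 2] by linarith
  then have pos: "0 < 8 * X ^ 2 * (1 / 2 - 2 * t + t ^ 2)"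
    using \<open>0 < X\<close> by simp
  have "real (NN_coeff {a, a + 1} 0) * real (NN_coeff {a, a + 1} 2) - real (NN_coeff {a, a + 1} 1) ^ 2
      = 8 * X ^ 2 * (1 / 2 - 2 * t + t ^ 2)"
    unfolding NN_coeff_consecutive[OF assms, folded X_def t_def]
    by (simp add: power2_eq_square algebra_simps)
  with pos show ?thesis
    by (intro not_log_concaveI[of 1, unfolded one_add_one]) (use assms in \<open>simp_all add: sI_two_descents\<close>)
qed

lemma pochhammer_two: "pochhammer x 2 = x * (x + 1)"
  by (simp add: pochhammer_Suc numeral_2_eq_2)

lemma NN_coeff_gap_two:
  assumes "3 \<le> a"
  defines "X \<equiv> real (lower_weight (a + 1) a 0)" and "w \<equiv> 1 / ((real a + 1) * (real a + 2))"
  shows "real (NN_coeff {a, a + 2} 1) = 3 * X * (1 / 2 - w)"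
    and "real (NN_coeff {a, a + 2} 2) = 3 * (3 * X * (1 / 6 - w))"
    and "real (NN_coeff {a, a + 2} 3) = 12 * (3 * X * (1 / 12 - w))"
proof -
  have C: "real (NN_coeff {a, a + 2} (j + 1))
      = upper_weight (a + 1) a (j + 1) * (3 * X * (1 / pochhammer (real j + 1) 2 - w))" if "j < a" for j
    using NN_coeff_two_descents[of a "a + 1" "j + 1"] sum_lower_weight[of j a "a + 1"] that
    by (simp add: X_def w_def fact_numeral pochhammer_two)
  have U: "upper_weight (a + 1) a 1 = 1" "upper_weight (a + 1) a 2 = 3" "upper_weight (a + 1) a 3 = 12"
    using upper_weight_Suc[of 0 "a + 1" a] upper_weight_Suc[of 1 "a + 1" a, unfolded one_add_one]
      upper_weight_Suc[of 2 "a + 1" a] assms(1)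
    by (simp_all add: hook_row2)
  show "real (NN_coeff {a, a + 2} 1) = 3 * X * (1 / 2 - w)"
    using C[of 0] U assms(1) by (simp add: pochhammer_two)
  show "real (NN_coeff {a, a + 2} 2) = 3 * (3 * X * (1 / 6 - w))"
    using C[of 1, unfolded one_add_one] U assms(1) by (simp add: pochhammer_two)
  show "real (NN_coeff {a, a + 2} 3) = 12 * (3 * X * (1 / 12 - w))"
    using C[of 2] U assms(1) by (simp add: pochhammer_two)
qed

lemma not_log_concave_gap_two:
  assumes "3 \<le> a"
  shows "\<not> log_concave (NN_coeff {a, a + 2}) (sI {a, a + 2})"
proof -
  define X where "X = real (lower_weight (a + 1) a 0)"
  define w where "w = 1 / ((real a + 1) * (real a + 2))"
  have "0 < X"
    using lower_weight_pos[of 0 a "a + 1"] assms by (simp add: X_def)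
  have "20 \<le> (real a + 1) * (real a + 2)"
    using mult_mono[of 4 "real a + 1" 5 "real a + 2"] assms by simp
  then have "0 < w" "w \<le> 1 / 20"
    by (simp_all add: w_def field_simps)
  then have "0 < 1 / 12 - 4 * w / 3 + w ^ 2"
    using zero_less_power[of w 2] by linarith
  then have pos: "0 < 27 * X ^ 2 * (1 / 12 - 4 * w / 3 + w ^ 2)"
    using \<open>0 < X\<close> by simp
  have "real (NN_coeff {a, a + 2} 1) * real (NN_coeff {a, a + 2} 3) - real (NN_coeff {a, a + 2} 2) ^ 2
      = 27 * X ^ 2 * (1 / 12 - 4 * w / 3 + w ^ 2)"
    unfolding NN_coeff_gap_two[OF assms, folded X_def w_def]
    by (simp add: power2_eq_square algebra_simps)
  with pos show ?thesis
    by (intro not_log_concaveI[of 2]) (use assms in \<open>simp_all add: sI_two_descents\<close>)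
qed

lemma log_concave_2_4: "log_concave (NN_coeff {2, 4}) (sI {2, 4})"
proof -
  have C: "NN_coeff {2, 4} k = upper_weight 3 2 k * (\<Sum>m = k - 1..<2. lower_weight 3 2 m)" if "k \<le> 2" for k
    using NN_coeff_two_descents[of 2 3 k] that by simp
  have W: "lower_weight 3 2 0 = 4 * lower_weight 3 2 1"
    using lower_weight_Suc[of 0 2 3] by simp
  have U: "upper_weight 3 2 1 = 1" "upper_weight 3 2 2 = 3"
    using upper_weight_Suc[of 0 3 2] upper_weight_Suc[of 1 3 2, unfolded one_add_one] by (simp_all add: hook_row2)
  have S: "{0..<2::nat} = {0, 1}" "{Suc 0..<2} = {Suc 0}"
    by auto
  have "NN_coeff {2, 4} 0 = NN_coeff {2, 4} 1" "NN_coeff {2, 4} 2 \<le> NN_coeff {2, 4} 1"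
    using C[of 0] C[of 1] C[of 2] U W by (simp_all add: S)
  then have ineq: "NN_coeff {2, 4} 0 * NN_coeff {2, 4} 2 \<le> NN_coeff {2, 4} 1 ^ 2"
    by (simp add: power2_eq_square)
  show ?thesis
    unfolding log_concave_def sI_two_descents[of 2 4, simplified]
  proof (intro allI impI)
    fix k :: nat assume "0 < k \<and> k < 2"
    then have "k = 1" by linarith
    then show "NN_coeff {2, 4} (k - 1) * NN_coeff {2, 4} (k + 1) \<le> NN_coeff {2, 4} k ^ 2"
      using ineq by (simp add: numeral_2_eq_2)
  qed
qed

theorem corollary6p4:
  fixes a b :: nat
  assumes "0 < a" and "a < b"
  shows "log_concave (NN_coeff {a, b}) (sI {a, b})
           \<longleftrightarrow> {a, b} \<in> {{1, 2}, {1, 3}, {2, 3}, {2, 4}}"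
proof -
  have pairs: "{a, b} \<in> {{1, 2}, {1, 3}, {2, 3}, {2, 4}} \<longleftrightarrow> (a, b) \<in> {(1, 2), (1, 3), (2, 3), (2, 4)}"
    using assms by (auto simp: doubleton_eq_iff)
  consider "b \<le> 3" | "a = 2" "b = 4" | "3 \<le> a" "b = a + 1" | "3 \<le> a" "b = a + 2" | "a + 3 \<le> b"
    using assms by linarith
  then show ?thesis
  proof cases
    case 1
    then have "sI {a, b} \<le> 1" "(a, b) \<in> {(1, 2), (1, 3), (2, 3)}"
      using assms by (auto simp: sI_two_descents)
    then show ?thesis using log_concave_trivial pairs by auto
  next
    case 2 then show ?thesis using log_concave_2_4 pairs by simp
  next
    case 3 then show ?thesis using not_log_concave_consecutive[of a] pairs by simp
  next
    case 4 then show ?thesis using not_log_concave_gap_two[of a] pairs by simp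
  next
    case 5 then show ?thesis using not_log_concave_far[of a b] assms pairs by auto
  qed
qed

end
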